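(* Let $G\subset\mathbb{R}^d$ be a bounded domain with $C^3$ boundary, let $f:\bar G\to[0,\infty)$ satisfy: $f_{\min}:=\inf_{x\in\bar G}f(x)>0$, $f$ has a unique minimizer in $\bar G$, and $|f(x)-f(y)|\le L_f|x-y|$ for all $x,y\in\bar G$. Let $\alpha,\beta,\sigma>0$. For $\mu\in\mathcal P(\bar G)$ set $\bar X^\mu=\int_{\bar G}xe^{-\alpha f(x)}\mu(dx)\big/\int_{\bar G}e^{-\alpha f(x)}\mu(dx)$ and define $$b(t,x,\mu)=\beta(x-\bar X^\mu),\qquad\sigma(t,x,\mu)=\sigma\,\mathrm{Diag}(x-\bar X^\mu).$$ Then there exists $L>0$ such that for all $t\ge0$, $x,y\in\bar G$ and $\mu^1,\mu^2\in\mathcal P(\bar G)$, $$|b(t,x,\mu^1)-b(t,y,\mu^2)|+|\sigma(t,x,\mu^1)-\sigma(t,y,\mu^2)|\le L\big(|x-y|+\mathcal W_4(\mu^1,\mu^2)\big),$$ and $b,\sigma$ are continuous in $t$.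
   Context: $\mathcal P(\bar G)$ is the set of Borel probability measures on $\bar G$; $\mathcal W_4$ is the Wasserstein 4-distance; $\mathrm{Diag}(v)$ is the diagonal matrix with diagonal $v$; the matrix norm is the Frobenius norm. *)

theory Defs
  imports "HOL-Analysis.Analysis" "HOL-Probability.Probability"
begin

fun Ck :: "nat \<Rightarrow> ('a::euclidean_space \<Rightarrow> real) \<Rightarrow> 'a set \<Rightarrow> bool" where
  "Ck 0 f S = continuous_on S f"
| "Ck (Suc k) f S =
     ((\<forall>x\<in>S. f differentiable (at x)) \<and>
      (\<forall>v. Ck k (\<lambda>x. frechet_derivative f (at x) v) S))"

definition bounded_domain :: "'a::euclidean_space set \<Rightarrow> bool" where
  "bounded_domain G \<longleftrightarrow> G \<noteq> {} \<and> open G \<and> connected G \<and> bounded G"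

definition Ck_boundary :: "nat \<Rightarrow> 'a::euclidean_space set \<Rightarrow> bool" where
  "Ck_boundary k G \<longleftrightarrow>
     (\<forall>p\<in>frontier G. \<exists>r>0. \<exists>\<phi>::'a \<Rightarrow> real.
        Ck k \<phi> (ball p r) \<and> \<phi> p = 0 \<and> frechet_derivative \<phi> (at p) \<noteq> (\<lambda>v. 0) \<and>
        G \<inter> ball p r = {x \<in> ball p r. \<phi> x < 0})"

definition Pbar :: "'a::euclidean_space set \<Rightarrow> 'a measure set" where
  "Pbar G = {\<mu>. prob_space \<mu> \<and> space \<mu> = closure G \<and>
                 sets \<mu> = sets (restrict_space borel (closure G))}"

definition couplings :: "'a measure \<Rightarrow> 'a measure \<Rightarrow> ('a \<times> 'a) measure set" where
  "couplings \<mu> \<nu> = {\<pi>. prob_space \<pi> \<and> sets \<pi> = sets (\<mu> \<Otimes>\<^sub>M \<nu>) \<and>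
                        distr \<pi> \<mu> fst = \<mu> \<and> distr \<pi> \<nu> snd = \<nu>}"

definition W4 :: "'a::euclidean_space measure \<Rightarrow> 'a measure \<Rightarrow> real" where
  "W4 \<mu> \<nu> = enn2real (INF \<pi>\<in>couplings \<mu> \<nu>.
                 \<integral>\<^sup>+ z. ennreal (dist (fst z) (snd z) ^ 4) \<partial>\<pi>) powr (1/4)"

definition Xbar :: "real \<Rightarrow> ('a::euclidean_space \<Rightarrow> real) \<Rightarrow> 'a measure \<Rightarrow> 'a" where
  "Xbar \<alpha> f \<mu> = (1 / (\<integral>x. exp (- \<alpha> * f x) \<partial>\<mu>)) *\<^sub>R (\<integral>x. exp (- \<alpha> * f x) *\<^sub>R x \<partial>\<mu>)"

definition Diag :: "real^'n \<Rightarrow> real^'n^'n" where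
  "Diag v = (\<chi> i j. if i = j then v $ i else 0)"

definition drift_b :: "real \<Rightarrow> real \<Rightarrow> (real^'n \<Rightarrow> real) \<Rightarrow> real \<Rightarrow> real^'n \<Rightarrow> (real^'n) measure \<Rightarrow> real^'n" where
  "drift_b \<beta> \<alpha> f t x \<mu> = \<beta> *\<^sub>R (x - Xbar \<alpha> f \<mu>)"

definition diffusion_sigma :: "real \<Rightarrow> real \<Rightarrow> (real^'n \<Rightarrow> real) \<Rightarrow> real \<Rightarrow> real^'n \<Rightarrow> (real^'n) measure \<Rightarrow> real^'n^'n" where
  "diffusion_sigma \<sigma> \<alpha> f t x \<mu> = \<sigma> *\<^sub>R Diag (x - Xbar \<alpha> f \<mu>)"

end

theory Submission
  imports Defs
begin

text \<open>
  Both coefficients depend on \<open>(x, \<mu>)\<close> only through \<open>x - X\<^sup>\<mu>\<close>, and \<open>|Diag v| = |v|\<close>, so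
  everything reduces to Lipschitz continuity of \<open>\<mu> \<mapsto> X\<^sup>\<mu>\<close> with respect to \<open>W\<^sub>4\<close>.
  \<open>X\<^sup>\<mu>\<close> is the quotient of the integrals of \<open>x \<mapsto> w x x\<close> and \<open>w\<close>, where the weight
  \<open>w = exp (-\<alpha> f)\<close> is Lipschitz and bounded below by \<open>exp (-\<alpha> max f) > 0\<close> on the compact
  set \<open>closure G\<close>. For a Lipschitz \<open>g\<close> and any coupling \<open>\<pi>\<close> of \<open>\<mu>\<close> and \<open>\<nu>\<close>,
  \<open>|\<integral>g d\<mu> - \<integral>g d\<nu>| \<le> L \<integral>|x - y| d\<pi> \<le> L (\<integral>|x - y|^4 d\<pi>)^(1/4)\<close> by Jensen's inequality,
  and taking the infimum over \<open>\<pi>\<close> gives the bound \<open>L W\<^sub>4(\<mu>, \<nu>)\<close>.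
\<close>

lemma lipschitz_on_exp_nonpos: "1-lipschitz_on {..0} (exp :: real \<Rightarrow> real)"
proof -
  have decrement: "exp u - exp v \<le> u - v" if "v \<le> u" "u \<le> 0" for u v :: real
  proof -
    have "exp u - exp v = exp u * (1 - exp (v - u))"
      by (simp add: algebra_simps exp_diff)
    also have "\<dots> \<le> 1 - exp (v - u)"
      by (rule mult_left_le_one_le) (use that in auto)
    also have "\<dots> \<le> u - v"
      using exp_ge_add_one_self[of "v - u"] by linarith
    finally show ?thesis .
  qed
  show ?thesis
  proof (rule lipschitz_onI)
    fix x y :: real assume "x \<in> {..0}" "y \<in> {..0}"
    then show "dist (exp x) (exp y) \<le> 1 * dist x y"
      using decrement[of x y] decrement[of y x] by (auto simp: dist_real_def abs_if)
  qed simp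
qed

lemma lipschitz_on_scaleR:
  fixes w :: "'a::metric_space \<Rightarrow> real" and v :: "'a \<Rightarrow> 'b::real_normed_vector"
  assumes "Lw-lipschitz_on U w" "Lv-lipschitz_on U v"
    and "\<And>x. x \<in> U \<Longrightarrow> \<bar>w x\<bar> \<le> B" "\<And>x. x \<in> U \<Longrightarrow> norm (v x) \<le> R"
    and "U \<noteq> {}"
  shows "(Lw * R + B * Lv)-lipschitz_on U (\<lambda>x. w x *\<^sub>R v x)"
proof (rule lipschitz_onI)
  fix x y assume x: "x \<in> U" and y: "y \<in> U"
  have "w x *\<^sub>R v x - w y *\<^sub>R v y = (w x - w y) *\<^sub>R v x + w y *\<^sub>R (v x - v y)"
    by (simp add: algebra_simps)
  then have "dist (w x *\<^sub>R v x) (w y *\<^sub>R v y) \<le> \<bar>w x - w y\<bar> * norm (v x) + \<bar>w y\<bar> * norm (v x - v y)"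
    by (metis dist_norm norm_scaleR norm_triangle_ineq)
  also have "\<dots> \<le> (Lw * dist x y) * R + B * (Lv * dist x y)"
    using assms x y lipschitz_on_nonneg[OF assms(1)] order_trans[OF abs_ge_zero assms(3)[OF y]]
    by (intro add_mono mult_mono) (auto simp: dist_real_def dist_norm lipschitz_on_def)
  finally show "dist (w x *\<^sub>R v x) (w y *\<^sub>R v y) \<le> (Lw * R + B * Lv) * dist x y"
    by (simp add: algebra_simps)
next
  obtain x where "x \<in> U"
    using \<open>U \<noteq> {}\<close> by blast
  then have "0 \<le> B" "0 \<le> R"
    using assms(3,4)[of x] abs_ge_zero norm_ge_zero by (blast intro: order_trans)+
  then show "0 \<le> Lw * R + B * Lv"
    using lipschitz_on_nonneg[OF assms(1)] lipschitz_on_nonneg[OF assms(2)] by simp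
qed

lemma (in prob_space) distr_pair_snd:
  assumes "prob_space N"
  shows "distr (N \<Otimes>\<^sub>M M) M snd = M"
proof (intro measure_eqI)
  fix A assume "A \<in> sets (distr (N \<Otimes>\<^sub>M M) M snd)"
  then have A: "A \<in> sets M" by simp
  then have "emeasure (distr (N \<Otimes>\<^sub>M M) M snd) A = emeasure (N \<Otimes>\<^sub>M M) (space N \<times> A)"
    by (auto simp: emeasure_distr space_pair_measure dest: sets.sets_into_space
        intro!: arg_cong2[where f=emeasure])
  also have "\<dots> = emeasure N (space N) * emeasure M A"
    using A by (intro emeasure_pair_measure_Times) auto
  finally show "emeasure (distr (N \<Otimes>\<^sub>M M) M snd) A = emeasure M A"
    using prob_space.emeasure_space_1[OF assms] by simp
qed simp

lemma pair_measure_in_couplings: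
  assumes "prob_space \<mu>" "prob_space \<nu>"
  shows "\<mu> \<Otimes>\<^sub>M \<nu> \<in> couplings \<mu> \<nu>"
  using prob_space_pair[OF assms] prob_space.distr_pair_fst[OF assms(2)]
    prob_space.distr_pair_snd[OF assms(2,1)]
  by (simp add: couplings_def)

lemma couplings_measurable_fst: "\<pi> \<in> couplings \<mu> \<nu> \<Longrightarrow> fst \<in> measurable \<pi> \<mu>"
  by (simp add: couplings_def cong: measurable_cong_sets)

lemma couplings_measurable_snd: "\<pi> \<in> couplings \<mu> \<nu> \<Longrightarrow> snd \<in> measurable \<pi> \<nu>"
  by (simp add: couplings_def cong: measurable_cong_sets)

lemma
  fixes g :: "'a \<Rightarrow> 'b::{banach,second_countable_topology}"
  assumes "\<pi> \<in> couplings \<mu> \<nu>" "integrable \<mu> g"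
  shows integrable_couplings_fst: "integrable \<pi> (\<lambda>z. g (fst z))"
    and integral_couplings_fst: "(\<integral>z. g (fst z) \<partial>\<pi>) = (\<integral>x. g x \<partial>\<mu>)"
  using integrable_distr_eq[OF couplings_measurable_fst[OF assms(1)], of g]
    integral_distr[OF couplings_measurable_fst[OF assms(1)], of g] assms
  by (auto simp: couplings_def)

lemma
  fixes g :: "'a \<Rightarrow> 'b::{banach,second_countable_topology}"
  assumes "\<pi> \<in> couplings \<mu> \<nu>" "integrable \<nu> g"
  shows integrable_couplings_snd: "integrable \<pi> (\<lambda>z. g (snd z))"
    and integral_couplings_snd: "(\<integral>z. g (snd z) \<partial>\<pi>) = (\<integral>x. g x \<partial>\<nu>)"
  using integrable_distr_eq[OF couplings_measurable_snd[OF assms(1)], of g]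
    integral_distr[OF couplings_measurable_snd[OF assms(1)], of g] assms
  by (auto simp: couplings_def)

lemma Pbar_D:
  assumes "\<mu> \<in> Pbar G"
  shows "prob_space \<mu>" "space \<mu> = closure G" "sets \<mu> = sets (restrict_space borel (closure G))"
  using assms by (auto simp: Pbar_def)

lemma borel_measurable_Pbar:
  assumes "\<mu> \<in> Pbar G" "continuous_on (closure G) g"
  shows "g \<in> borel_measurable \<mu>"
  using borel_measurable_continuous_on_restrict[OF assms(2)] Pbar_D(3)[OF assms(1)]
  by (simp cong: measurable_cong_sets)

lemma integrable_Pbar:
  fixes g :: "'a::euclidean_space \<Rightarrow> 'b::{banach,second_countable_topology}"
  assumes "bounded G" "\<mu> \<in> Pbar G" "continuous_on (closure G) g"
  shows "integrable \<mu> g"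
proof -
  interpret prob_space \<mu> using Pbar_D(1)[OF assms(2)] .
  have "compact (g ` closure G)"
    using assms(1,3) by (intro compact_continuous_image) auto
  then obtain B where "\<And>x. x \<in> closure G \<Longrightarrow> norm (g x) \<le> B"
    by (meson compact_imp_bounded bounded_iff imageI)
  then show ?thesis
    using borel_measurable_Pbar[OF assms(2,3)] Pbar_D(2)[OF assms(2)]
    by (intro integrable_const_bound[where B=B]) auto
qed

lemma integral_ge_const_Pbar:
  fixes g :: "'a::euclidean_space \<Rightarrow> real"
  assumes "bounded G" "\<mu> \<in> Pbar G" "continuous_on (closure G) g"
    and "\<And>x. x \<in> closure G \<Longrightarrow> c \<le> g x"
  shows "c \<le> (\<integral>x. g x \<partial>\<mu>)"
  using assms integrable_Pbar[OF assms(1-3)]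
  by (intro prob_space.integral_ge_const AE_I2) (auto dest: Pbar_D)

lemma norm_integral_le_Pbar:
  fixes g :: "'a::euclidean_space \<Rightarrow> 'b::{banach,second_countable_topology}"
  assumes "bounded G" "\<mu> \<in> Pbar G" "continuous_on (closure G) g"
    and "\<And>x. x \<in> closure G \<Longrightarrow> norm (g x) \<le> c"
  shows "norm (\<integral>x. g x \<partial>\<mu>) \<le> c"
proof -
  have "norm (\<integral>x. g x \<partial>\<mu>) \<le> (\<integral>x. norm (g x) \<partial>\<mu>)"
    by (rule integral_norm_bound)
  also have "\<dots> \<le> c"
    using assms integrable_norm[OF integrable_Pbar[OF assms(1-3)]]
    by (intro prob_space.integral_le_const AE_I2) (auto dest: Pbar_D)
  finally show ?thesis .
qed

lemma couplings_space_Pbar: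
  assumes "\<pi> \<in> couplings \<mu> \<nu>" "\<mu> \<in> Pbar G" "\<nu> \<in> Pbar G"
  shows "space \<pi> = closure G \<times> closure G"
  using sets_eq_imp_space_eq[of \<pi> "\<mu> \<Otimes>\<^sub>M \<nu>"] assms
  by (simp add: couplings_def Pbar_def space_pair_measure)

lemma borel_measurable_couplings_dist:
  fixes \<mu> \<nu> :: "'a::euclidean_space measure"
  assumes "\<pi> \<in> couplings \<mu> \<nu>" "\<mu> \<in> Pbar G" "\<nu> \<in> Pbar G"
  shows "(\<lambda>z. dist (fst z) (snd z)) \<in> borel_measurable \<pi>"
proof -
  have "(\<lambda>x. x) \<in> borel_measurable \<mu>" "(\<lambda>x. x) \<in> borel_measurable \<nu>"
    using borel_measurable_Pbar[OF _ continuous_on_id] assms(2,3) by auto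
  then show ?thesis
    by (intro borel_measurable_dist measurable_compose[OF couplings_measurable_fst[OF assms(1)]]
        measurable_compose[OF couplings_measurable_snd[OF assms(1)]])
qed

lemma integrable_couplings_dist_power:
  fixes \<mu> \<nu> :: "'a::euclidean_space measure"
  assumes "bounded G" "\<pi> \<in> couplings \<mu> \<nu>" "\<mu> \<in> Pbar G" "\<nu> \<in> Pbar G"
  shows "integrable \<pi> (\<lambda>z. dist (fst z) (snd z) ^ k)"
proof -
  interpret prob_space \<pi> using assms(2) by (simp add: couplings_def)
  have "norm (dist (fst z) (snd z) ^ k) \<le> diameter (closure G) ^ k" if "z \<in> space \<pi>" for z
  proof -
    have "fst z \<in> closure G" "snd z \<in> closure G"
      using that couplings_space_Pbar[OF assms(2-4)] by (auto simp: mem_Times_iff)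
    then show ?thesis
      using bounded_closure[OF assms(1)] by (simp add: power_mono diameter_bounded_bound)
  qed
  moreover have "(\<lambda>z. dist (fst z) (snd z) ^ k) \<in> borel_measurable \<pi>"
    using borel_measurable_couplings_dist[OF assms(2-4)] by measurable
  ultimately show ?thesis
    by (intro integrable_const_bound[where B="diameter (closure G) ^ k"] AE_I2)
qed

lemma W4_nonneg: "0 \<le> W4 \<mu> \<nu>"
  by (simp add: W4_def)

lemma nn_integral_couplings_dist_power:
  fixes \<mu> \<nu> :: "'a::euclidean_space measure"
  assumes "bounded G" "\<pi> \<in> couplings \<mu> \<nu>" "\<mu> \<in> Pbar G" "\<nu> \<in> Pbar G"
  shows "(\<integral>\<^sup>+ z. ennreal (dist (fst z) (snd z) ^ k) \<partial>\<pi>) = ennreal (\<integral>z. dist (fst z) (snd z) ^ k \<partial>\<pi>)"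
  using integrable_couplings_dist_power[OF assms] by (intro nn_integral_eq_integral) auto

lemma mean_dist_power4_le_couplings:
  fixes \<mu> \<nu> :: "'a::euclidean_space measure"
  assumes "bounded G" "\<pi> \<in> couplings \<mu> \<nu>" "\<mu> \<in> Pbar G" "\<nu> \<in> Pbar G"
  shows "(\<integral>z. dist (fst z) (snd z) \<partial>\<pi>) ^ 4 \<le> (\<integral>z. dist (fst z) (snd z) ^ 4 \<partial>\<pi>)"
proof -
  interpret prob_space \<pi> using assms(2) by (simp add: couplings_def)
  show ?thesis
    using integrable_couplings_dist_power[OF assms, of 1] integrable_couplings_dist_power[OF assms, of 4]
      convex_power_even[of 4]
    by (intro jensens_inequality[of _ UNIV 0 0 "\<lambda>x. x ^ 4", simplified]) auto
qed

lemma W4_greatest: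
  fixes \<mu> \<nu> :: "'a::euclidean_space measure"
  assumes "bounded G" "\<mu> \<in> Pbar G" "\<nu> \<in> Pbar G"
    and "\<And>\<pi>. \<pi> \<in> couplings \<mu> \<nu> \<Longrightarrow> c \<le> (\<integral>z. dist (fst z) (snd z) \<partial>\<pi>)"
  shows "c \<le> W4 \<mu> \<nu>"
proof (cases "c \<le> 0")
  case True
  then show ?thesis using W4_nonneg order_trans by blast
next
  case False
  define I where "I = (INF \<pi>\<in>couplings \<mu> \<nu>. \<integral>\<^sup>+ z. ennreal (dist (fst z) (snd z) ^ 4) \<partial>\<pi>)"
  note nn_integral_eq = nn_integral_couplings_dist_power[OF assms(1) _ assms(2,3)]
  have "ennreal (c ^ 4) \<le> I"
    unfolding I_def
  proof (rule INF_greatest)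
    fix \<pi> assume \<pi>: "\<pi> \<in> couplings \<mu> \<nu>"
    have "c ^ 4 \<le> (\<integral>z. dist (fst z) (snd z) \<partial>\<pi>) ^ 4"
      using assms(4)[OF \<pi>] False by (intro power_mono) auto
    also have "\<dots> \<le> (\<integral>z. dist (fst z) (snd z) ^ 4 \<partial>\<pi>)"
      by (rule mean_dist_power4_le_couplings[OF assms(1) \<pi> assms(2,3)])
    finally show "ennreal (c ^ 4) \<le> (\<integral>\<^sup>+ z. ennreal (dist (fst z) (snd z) ^ 4) \<partial>\<pi>)"
      unfolding nn_integral_eq[OF \<pi>] by (rule ennreal_leI)
  qed
  moreover have "I < \<infinity>"
  proof -
    have product: "\<mu> \<Otimes>\<^sub>M \<nu> \<in> couplings \<mu> \<nu>"
      using assms(2,3) by (intro pair_measure_in_couplings) (auto dest: Pbar_D)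
    then show ?thesis
      unfolding I_def by (rule INF_lower[THEN le_less_trans]) (simp add: nn_integral_eq[OF product])
  qed
  ultimately have "c ^ 4 \<le> enn2real I"
    using enn2real_mono by fastforce
  then have "(c ^ 4) powr (1/4) \<le> enn2real I powr (1/4)"
    using False by (intro powr_mono2) auto
  moreover have "(c ^ 4) powr (1/4) = c"
    using False root_powr_inverse[of 4 "c ^ 4"] real_root_power_cancel[of 4 c] by simp
  ultimately show ?thesis
    by (simp add: W4_def I_def)
qed

lemma lipschitz_integral_diff_le_couplings:
  fixes g :: "'a::euclidean_space \<Rightarrow> 'b::{banach,second_countable_topology}"
  assumes "bounded G" "\<pi> \<in> couplings \<mu> \<nu>" "\<mu> \<in> Pbar G" "\<nu> \<in> Pbar G"
    and "L-lipschitz_on (closure G) g"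
  shows "norm ((\<integral>x. g x \<partial>\<mu>) - (\<integral>x. g x \<partial>\<nu>)) \<le> L * (\<integral>z. dist (fst z) (snd z) \<partial>\<pi>)"
proof -
  have "integrable \<mu> g" "integrable \<nu> g"
    using assms lipschitz_on_continuous_on by (blast intro: integrable_Pbar)+
  note fst = integrable_couplings_fst[OF assms(2) this(1)] integral_couplings_fst[OF assms(2) this(1)]
    and snd = integrable_couplings_snd[OF assms(2) this(2)] integral_couplings_snd[OF assms(2) this(2)]
  have "(\<integral>x. g x \<partial>\<mu>) - (\<integral>x. g x \<partial>\<nu>) = (\<integral>z. g (fst z) - g (snd z) \<partial>\<pi>)"
    using fst snd by simp
  also have "norm \<dots> \<le> (\<integral>z. norm (g (fst z) - g (snd z)) \<partial>\<pi>)"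
    by (rule integral_norm_bound)
  also have "\<dots> \<le> (\<integral>z. L * dist (fst z) (snd z) \<partial>\<pi>)"
  proof (rule integral_mono)
    show "integrable \<pi> (\<lambda>z. L * dist (fst z) (snd z))"
      using integrable_couplings_dist_power[OF assms(1-4), of 1] by simp
    show "norm (g (fst z) - g (snd z)) \<le> L * dist (fst z) (snd z)" if "z \<in> space \<pi>" for z
      using that couplings_space_Pbar[OF assms(2-4)] lipschitz_onD[OF assms(5)]
      by (auto simp: dist_norm mem_Times_iff)
  qed (use fst snd in auto)
  finally show ?thesis by simp
qed

lemma lipschitz_integral_diff_le_W4:
  fixes g :: "'a::euclidean_space \<Rightarrow> 'b::{banach,second_countable_topology}"
  assumes "bounded G" "\<mu> \<in> Pbar G" "\<nu> \<in> Pbar G" "L-lipschitz_on (closure G) g"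
  shows "norm ((\<integral>x. g x \<partial>\<mu>) - (\<integral>x. g x \<partial>\<nu>)) \<le> L * W4 \<mu> \<nu>"
proof (cases "L = 0")
  case True
  have "\<mu> \<Otimes>\<^sub>M \<nu> \<in> couplings \<mu> \<nu>"
    using assms(2,3) by (intro pair_measure_in_couplings) (auto dest: Pbar_D)
  then show ?thesis
    using lipschitz_integral_diff_le_couplings[OF assms(1) _ assms(2-4)] True by simp
next
  case False
  then have L: "0 < L"
    using lipschitz_on_nonneg[OF assms(4)] by simp
  have "norm ((\<integral>x. g x \<partial>\<mu>) - (\<integral>x. g x \<partial>\<nu>)) / L \<le> W4 \<mu> \<nu>"
    using lipschitz_integral_diff_le_couplings[OF assms(1) _ assms(2-4)] L
    by (intro W4_greatest[OF assms(1-3)]) (simp add: divide_le_eq mult.commute)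
  then show ?thesis
    using L by (simp add: divide_le_eq mult.commute)
qed

lemma norm_divide_scaleR_diff_le:
  fixes N1 N2 :: "'a::real_normed_vector"
  assumes "0 < m" "m \<le> D1" "m \<le> D2" "norm N2 \<le> R"
  shows "norm ((1 / D1) *\<^sub>R N1 - (1 / D2) *\<^sub>R N2) \<le> norm (N1 - N2) / m + R * \<bar>D1 - D2\<bar> / m\<^sup>2"
proof -
  have inverse_diff: "1 / D1 - 1 / D2 = (D2 - D1) / (D1 * D2)"
    using assms by (simp add: field_simps)
  have "(1 / D1) *\<^sub>R N1 - (1 / D2) *\<^sub>R N2 = (1 / D1) *\<^sub>R (N1 - N2) + ((D2 - D1) / (D1 * D2)) *\<^sub>R N2"
    by (simp add: algebra_simps flip: inverse_diff)
  also have "norm \<dots> \<le> norm (N1 - N2) / D1 + \<bar>D1 - D2\<bar> / (D1 * D2) * norm N2"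
    using assms by (intro order_trans[OF norm_triangle_ineq]) (simp add: abs_mult abs_minus_commute)
  also have "\<dots> \<le> norm (N1 - N2) / m + \<bar>D1 - D2\<bar> / (m * m) * R"
    using assms by (intro add_mono mult_mono frac_le mult_mono') auto
  finally show ?thesis
    by (simp add: power2_eq_square mult.commute)
qed

lemma weighted_mean_diff_le_W4:
  fixes w :: "'a::euclidean_space \<Rightarrow> real"
  assumes "bounded G" "G \<noteq> {}" "\<mu> \<in> Pbar G" "\<nu> \<in> Pbar G" "Lw-lipschitz_on (closure G) w"
    and "0 < m" "\<And>x. x \<in> closure G \<Longrightarrow> m \<le> w x"
    and B: "\<And>x. x \<in> closure G \<Longrightarrow> \<bar>w x\<bar> \<le> B" and R: "\<And>x. x \<in> closure G \<Longrightarrow> norm x \<le> R"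
  shows "norm ((1 / (\<integral>x. w x \<partial>\<mu>)) *\<^sub>R (\<integral>x. w x *\<^sub>R x \<partial>\<mu>)
        - (1 / (\<integral>x. w x \<partial>\<nu>)) *\<^sub>R (\<integral>x. w x *\<^sub>R x \<partial>\<nu>))
    \<le> ((Lw * R + B) / m + B * R * Lw / m\<^sup>2) * W4 \<mu> \<nu>"
proof -
  have "0 \<le> B" "0 \<le> R"
    using B R assms(2) closure_subset
    by (meson abs_ge_zero all_not_in_conv norm_ge_zero order_trans subsetD)+
  have w_continuous: "continuous_on (closure G) w"
    using assms(5) by (rule lipschitz_on_continuous_on)
  have moment_lipschitz: "(Lw * R + B * 1)-lipschitz_on (closure G) (\<lambda>x. w x *\<^sub>R x)"
    using B R assms(2) by (intro lipschitz_on_scaleR[OF assms(5) lipschitz_on_id]) auto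
  have mass_ge: "m \<le> (\<integral>x. w x \<partial>\<rho>)" if "\<rho> \<in> Pbar G" for \<rho>
    using assms(7) by (rule integral_ge_const_Pbar[OF assms(1) that w_continuous])
  have moment_bound: "norm (\<integral>x. w x *\<^sub>R x \<partial>\<nu>) \<le> B * R"
    using B R \<open>0 \<le> B\<close> by (intro norm_integral_le_Pbar[OF assms(1,4)
        lipschitz_on_continuous_on[OF moment_lipschitz]]) (auto intro: mult_mono)
  have "norm ((1 / (\<integral>x. w x \<partial>\<mu>)) *\<^sub>R (\<integral>x. w x *\<^sub>R x \<partial>\<mu>)
        - (1 / (\<integral>x. w x \<partial>\<nu>)) *\<^sub>R (\<integral>x. w x *\<^sub>R x \<partial>\<nu>))
      \<le> norm ((\<integral>x. w x *\<^sub>R x \<partial>\<mu>) - (\<integral>x. w x *\<^sub>R x \<partial>\<nu>)) / m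
        + B * R * \<bar>(\<integral>x. w x \<partial>\<mu>) - (\<integral>x. w x \<partial>\<nu>)\<bar> / m\<^sup>2"
    by (rule norm_divide_scaleR_diff_le[OF assms(6) mass_ge[OF assms(3)] mass_ge[OF assms(4)]
          moment_bound])
  also have "\<dots> \<le> (Lw * R + B) * W4 \<mu> \<nu> / m + B * R * (Lw * W4 \<mu> \<nu>) / m\<^sup>2"
    using lipschitz_integral_diff_le_W4[OF assms(1,3,4) moment_lipschitz]
      lipschitz_integral_diff_le_W4[OF assms(1,3,4,5)] \<open>0 \<le> B\<close> \<open>0 \<le> R\<close> \<open>0 < m\<close>
    by (intro add_mono divide_right_mono mult_left_mono) auto
  also have "\<dots> = ((Lw * R + B) / m + B * R * Lw / m\<^sup>2) * W4 \<mu> \<nu>"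
    by (simp add: field_simps)
  finally show ?thesis .
qed

lemma weighted_mean_W4_lipschitz:
  fixes w :: "'a::euclidean_space \<Rightarrow> real"
  assumes "bounded G" "G \<noteq> {}" "Lw-lipschitz_on (closure G) w"
    and "0 < m" "\<And>x. x \<in> closure G \<Longrightarrow> m \<le> w x"
  shows "\<exists>C\<ge>0. \<forall>\<mu>\<in>Pbar G. \<forall>\<nu>\<in>Pbar G.
    norm ((1 / (\<integral>x. w x \<partial>\<mu>)) *\<^sub>R (\<integral>x. w x *\<^sub>R x \<partial>\<mu>)
        - (1 / (\<integral>x. w x \<partial>\<nu>)) *\<^sub>R (\<integral>x. w x *\<^sub>R x \<partial>\<nu>)) \<le> C * W4 \<mu> \<nu>"
proof -
  have K: "compact (closure G)"
    using assms(1) by simp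
  obtain B where B: "\<And>x. x \<in> closure G \<Longrightarrow> \<bar>w x\<bar> \<le> B"
    using compact_imp_bounded[OF compact_continuous_image[OF
          lipschitz_on_continuous_on[OF assms(3)] K]]
    by (auto simp: bounded_iff)
  obtain R where R: "\<And>x. x \<in> closure G \<Longrightarrow> norm x \<le> R"
    using compact_imp_bounded[OF K] by (auto simp: bounded_iff)
  have "0 \<le> B" "0 \<le> R"
    using B R assms(2) closure_subset
    by (meson abs_ge_zero all_not_in_conv norm_ge_zero order_trans subsetD)+
  then have "0 \<le> (Lw * R + B) / m + B * R * Lw / m\<^sup>2"
    using \<open>0 < m\<close> lipschitz_on_nonneg[OF assms(3)] by simp
  then show ?thesis
    using weighted_mean_diff_le_W4[OF assms(1,2) _ _ assms(3-5) B R] by blast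
qed

lemma Xbar_W4_lipschitz:
  fixes f :: "'a::euclidean_space \<Rightarrow> real"
  assumes "bounded G" "G \<noteq> {}" "Lf-lipschitz_on (closure G) f"
    and "\<And>x. x \<in> closure G \<Longrightarrow> 0 \<le> f x" "0 \<le> \<alpha>"
  shows "\<exists>C\<ge>0. \<forall>\<mu>\<in>Pbar G. \<forall>\<nu>\<in>Pbar G. norm (Xbar \<alpha> f \<mu> - Xbar \<alpha> f \<nu>) \<le> C * W4 \<mu> \<nu>"
proof -
  have "bounded (f ` closure G)"
    using assms(1) by (intro compact_imp_bounded compact_continuous_image
        lipschitz_on_continuous_on[OF assms(3)]) simp
  then obtain M where "\<And>y. y \<in> f ` closure G \<Longrightarrow> \<bar>y\<bar> \<le> M"
    by (auto simp: bounded_real)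
  then have M: "\<And>x. x \<in> closure G \<Longrightarrow> f x \<le> M"
    by (force dest: abs_le_D1)
  have exponent_lipschitz: "(\<alpha> * Lf)-lipschitz_on (closure G) (\<lambda>x. - \<alpha> * f x)"
    using lipschitz_on_cmult_real[OF assms(3), of "- \<alpha>"] assms(5) by simp
  have weight_lipschitz: "(1 * (\<alpha> * Lf))-lipschitz_on (closure G) (\<lambda>x. exp (- \<alpha> * f x))"
    using assms(4,5) by (intro lipschitz_on_compose2[OF exponent_lipschitz]
        lipschitz_on_subset[OF lipschitz_on_exp_nonpos]) (auto simp: mult_nonneg_nonneg)
  have weight_lower: "exp (- \<alpha> * M) \<le> exp (- \<alpha> * f x)" if "x \<in> closure G" for x
    using M[OF that] assms(5) by (simp add: mult_left_mono)
  show ?thesis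
    unfolding Xbar_def
    by (rule weighted_mean_W4_lipschitz[OF assms(1,2) weight_lipschitz exp_gt_zero weight_lower])
qed

lemma norm_Diag: "norm (Diag v) = norm v"
proof -
  have "norm (Diag v $ i) = \<bar>v $ i\<bar>" for i
  proof -
    have "(\<Sum>j\<in>UNIV. (if i = j then v $ i else 0)\<^sup>2) = (\<Sum>j\<in>UNIV. if i = j then (v $ i)\<^sup>2 else 0)"
      by (rule sum.cong) auto
    then show ?thesis
      by (simp add: norm_vec_def L2_set_def Diag_def)
  qed
  then show ?thesis
    by (simp add: norm_vec_def)
qed

lemma Diag_diff: "Diag a - Diag b = Diag (a - b)"
  by (simp add: Diag_def vec_eq_iff)

lemma norm_drift_diffusion_diff:
  "norm (drift_b \<beta> \<alpha> f t x \<mu> - drift_b \<beta> \<alpha> f s y \<nu>)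
     + norm (diffusion_sigma \<sigma> \<alpha> f t x \<mu> - diffusion_sigma \<sigma> \<alpha> f s y \<nu>)
   = (\<bar>\<beta>\<bar> + \<bar>\<sigma>\<bar>) * norm ((x - y) - (Xbar \<alpha> f \<mu> - Xbar \<alpha> f \<nu>))"
proof -
  have rearrange: "x - Xbar \<alpha> f \<mu> - (y - Xbar \<alpha> f \<nu>) = (x - y) - (Xbar \<alpha> f \<mu> - Xbar \<alpha> f \<nu>)"
    by (simp add: algebra_simps)
  show ?thesis
    by (simp add: drift_b_def diffusion_sigma_def norm_Diag Diag_diff distrib_right
        flip: scaleR_diff_right) (simp only: rearrange)
qed

theorem lemma3p7:
  fixes G :: "(real^'n) set" and f :: "real^'n \<Rightarrow> real"
    and \<alpha> \<beta> \<sigma> Lf :: real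
  assumes "bounded_domain G" and "Ck_boundary 3 G"
    and "\<forall>x\<in>closure G. f x \<ge> 0"
    and "Inf (f ` closure G) > 0"
    and "\<exists>!x. x \<in> closure G \<and> (\<forall>y\<in>closure G. f x \<le> f y)"
    and "\<forall>x\<in>closure G. \<forall>y\<in>closure G. \<bar>f x - f y\<bar> \<le> Lf * norm (x - y)"
    and "\<alpha> > 0" and "\<beta> > 0" and "\<sigma> > 0"
  shows "\<exists>L>0.
     (\<forall>t\<ge>0. \<forall>x\<in>closure G. \<forall>y\<in>closure G. \<forall>\<mu>1\<in>Pbar G. \<forall>\<mu>2\<in>Pbar G.
        norm (drift_b \<beta> \<alpha> f t x \<mu>1 - drift_b \<beta> \<alpha> f t y \<mu>2)
        + norm (diffusion_sigma \<sigma> \<alpha> f t x \<mu>1 - diffusion_sigma \<sigma> \<alpha> f t y \<mu>2)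
        \<le> L * (norm (x - y) + W4 \<mu>1 \<mu>2))
   \<and> (\<forall>x\<in>closure G. \<forall>\<mu>\<in>Pbar G.
        continuous_on {0..} (\<lambda>t. drift_b \<beta> \<alpha> f t x \<mu>) \<and>
        continuous_on {0..} (\<lambda>t. diffusion_sigma \<sigma> \<alpha> f t x \<mu>))"
proof -
  have G: "bounded G" "G \<noteq> {}"
    using assms(1) by (auto simp: bounded_domain_def)
  have "(max Lf 0)-lipschitz_on (closure G) f"
    using assms(6) by (intro lipschitz_onI) (auto simp: dist_real_def dist_norm
        intro: order_trans[OF _ mult_right_mono[OF max.cobounded1]])
  then obtain C where "0 \<le> C"
    and Xbar_lipschitz: "\<forall>\<mu>\<in>Pbar G. \<forall>\<nu>\<in>Pbar G. norm (Xbar \<alpha> f \<mu> - Xbar \<alpha> f \<nu>) \<le> C * W4 \<mu> \<nu>"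
    using Xbar_W4_lipschitz[OF G] assms(3,7) by (metis less_imp_le)
  define L where "L = (\<beta> + \<sigma>) * (1 + C)"
  have "norm (drift_b \<beta> \<alpha> f t x \<mu>1 - drift_b \<beta> \<alpha> f t y \<mu>2)
        + norm (diffusion_sigma \<sigma> \<alpha> f t x \<mu>1 - diffusion_sigma \<sigma> \<alpha> f t y \<mu>2)
        \<le> L * (norm (x - y) + W4 \<mu>1 \<mu>2)" if "\<mu>1 \<in> Pbar G" "\<mu>2 \<in> Pbar G" for t x y \<mu>1 \<mu>2
  proof -
    have "norm ((x - y) - (Xbar \<alpha> f \<mu>1 - Xbar \<alpha> f \<mu>2)) \<le> norm (x - y) + C * W4 \<mu>1 \<mu>2"
      using norm_triangle_ineq4[of "x - y"] Xbar_lipschitz that by (meson add_left_mono order_trans)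
    also have "\<dots> \<le> (1 + C) * (norm (x - y) + W4 \<mu>1 \<mu>2)"
      using \<open>0 \<le> C\<close> W4_nonneg[of \<mu>1 \<mu>2] by (simp add: algebra_simps)
    finally show ?thesis
      unfolding norm_drift_diffusion_diff L_def using assms(8,9)
      by (simp add: mult.assoc mult_left_mono)
  qed
  moreover have "0 < L"
    unfolding L_def using assms(8,9) \<open>0 \<le> C\<close> by simp
  ultimately show ?thesis
    by (auto simp: drift_b_def diffusion_sigma_def)
qed

end
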